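(* Let $P,R,Q$ be polytopes with $R\subset Q$, and let $m\ge2$. (a) If $f\in\operatorname{vert}(P,Q)$ and $f(P)\subset R$, then $f\in\operatorname{vert}(P,R)$. (b) If $P$ is centrally symmetric, $f\in\operatorname{vert}(\Diamond_m,P)$ and $f(0)$ is the center of $P$, then $f(\operatorname{vert}(\Diamond_m))\subset\operatorname{vert}(P)$. (c) If $f\in\operatorname{vert}(\Diamond_m,P)$, then $f(\operatorname{vert}(\Diamond_m))=\operatorname{vert}(f(\Diamond_m))\subset\operatorname{vert}\big(P\cap(2f(0)-P)\big)$.
   Context: For convex polytopes $P,Q$, $\operatorname{Hom}(P,Q)$ is the set of maps $P\to Q$ that are restrictions of affine maps $\operatorname{Aff}(P)\to\operatorname{Aff}(Q)$; it is a convex polytope in the affine space of affine maps $\operatorname{Aff}(P)\to\operatorname{Aff}(Q)$, and $\operatorname{vert}(P,Q)$ denotes its set of vertices. $\operatorname{vert}(X)$ denotes the vertex set of a polytope $X$. $\Diamond_m=\operatorname{conv}(\pm e_1,\ldots,\pm e_m)\subset\mathbb{R}^m$, and $2f(0)-P=\{2f(0)-x:x\in P\}$. *)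

theory Defs
  imports "HOL-Analysis.Analysis"
begin

definition affine_map :: "('a::real_vector \<Rightarrow> 'b::real_vector) \<Rightarrow> bool" where
  "affine_map f \<longleftrightarrow> (\<exists>g b. linear g \<and> (\<forall>x. f x = g x + b))"

text \<open>Hom(P,Q): affine maps sending P into Q.  Two such maps represent the same
  element of Hom(P,Q) iff they agree on P (hence on Aff(P)).\<close>
definition hom_maps :: "'a::real_vector set \<Rightarrow> 'b::real_vector set \<Rightarrow> ('a \<Rightarrow> 'b) set" where
  "hom_maps P Q = {f. affine_map f \<and> f ` P \<subseteq> Q}"

definition vert_hom :: "'a::real_vector set \<Rightarrow> 'b::real_vector set \<Rightarrow> ('a \<Rightarrow> 'b) set" where
  "vert_hom P Q = {f. f \<in> hom_maps P Q \<and>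
     (\<forall>g\<in>hom_maps P Q. \<forall>h\<in>hom_maps P Q. \<forall>u::real. 0 < u \<and> u < 1 \<and>
        (\<forall>x\<in>P. f x = (1 - u) *\<^sub>R g x + u *\<^sub>R h x) \<longrightarrow> (\<forall>x\<in>P. g x = h x))}"

definition vert :: "'a::real_vector set \<Rightarrow> 'a set" where
  "vert X = {x. x extreme_point_of X}"

definition diamond :: "(real^'m) set" where
  "diamond = convex hull ((\<lambda>i. axis i 1) ` UNIV \<union> (\<lambda>i. - axis i 1) ` UNIV)"

definition centrally_symmetric_about :: "'a::real_vector \<Rightarrow> 'a set \<Rightarrow> bool" where
  "centrally_symmetric_about c P \<longleftrightarrow> (\<forall>x\<in>P. 2 *\<^sub>R c - x \<in> P)"

end

theory Submission
  imports Defs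
begin

text \<open>Let \<open>f\<close> be a vertex of \<open>Hom(\<Diamond>\<^sub>m, P)\<close> and \<open>v\<close> a vertex of \<open>\<Diamond>\<^sub>m\<close>.  Any
  \<open>a, c \<in> P \<inter> (2 f(0) - P)\<close> give maps \<open>f + \<langle>v, \<cdot>\<rangle> (a - f v)\<close> and \<open>f + \<langle>v, \<cdot>\<rangle> (c - f v)\<close>
  in \<open>Hom(\<Diamond>\<^sub>m, P)\<close>: they move only the opposite vertices \<open>\<plusminus>v\<close>, sending \<open>v\<close> to
  \<open>a\<close> (resp. \<open>c\<close>) and \<open>-v\<close> to \<open>2 f(0) - a \<in> P\<close>.  If \<open>f v\<close> lay in the open segment
  between \<open>a\<close> and \<open>c\<close>, \<open>f\<close> would be the corresponding proper convex combination of
  these two maps, so they coincide and \<open>a = c\<close>.  Hence \<open>f\<close> maps every vertex of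
  \<open>\<Diamond>\<^sub>m\<close> to an extreme point of \<open>P \<inter> (2 f(0) - P)\<close>, which gives (c), and (b) is the
  case \<open>P = 2 f(0) - P\<close>.\<close>

lemma affine_map_iff_linear_diff:
  "affine_map f \<longleftrightarrow> linear (\<lambda>x. f x - f 0)"
proof
  assume "affine_map f"
  then obtain g b where "linear g" "\<And>x. f x = g x + b"
    unfolding affine_map_def by blast
  then show "linear (\<lambda>x. f x - f 0)"
    by (simp add: linear_0)
next
  assume "linear (\<lambda>x. f x - f 0)"
  then show "affine_map f"
    unfolding affine_map_def by (intro exI[of _ "\<lambda>x. f x - f 0"] exI[of _ "f 0"]) simp
qed

lemma affine_map_add_linear:
  assumes "affine_map f" and "linear h"
  shows "affine_map (\<lambda>x. f x + h x)"
proof -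
  have "linear (\<lambda>x. (f x - f 0) + h x)"
    using assms by (intro linear_compose_add) (simp_all add: affine_map_iff_linear_diff)
  then show ?thesis
    using linear_0[OF assms(2)] by (simp add: affine_map_iff_linear_diff algebra_simps)
qed

lemma affine_map_reflect:
  assumes "affine_map f"
  shows "f (- x) = 2 *\<^sub>R f 0 - f x"
proof -
  have "f (- x) - f 0 = - (f x - f 0)"
    using assms linear_neg unfolding affine_map_iff_linear_diff by blast
  then show ?thesis
    by (simp add: scaleR_2 algebra_simps)
qed

lemma affine_map_image_convex_hull:
  assumes "affine_map f"
  shows "f ` (convex hull S) = convex hull (f ` S)"
proof -
  define g where "g x = f x - f 0" for x
  have "linear g"
    using assms unfolding g_def affine_map_iff_linear_diff .
  have f_eq: "f ` X = (+) (f 0) ` (g ` X)" for X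
    by (auto simp: g_def image_iff)
  show ?thesis
    unfolding f_eq convex_hull_linear_image[OF \<open>linear g\<close>]
    by (rule convex_hull_translation[symmetric])
qed

lemma vert_hom_restrict_codomain:
  assumes "f \<in> vert_hom P Q" and "f ` P \<subseteq> R" and "R \<subseteq> Q"
  shows "f \<in> vert_hom P R"
proof -
  have "hom_maps P R \<subseteq> hom_maps P Q"
    using \<open>R \<subseteq> Q\<close> unfolding hom_maps_def by blast
  then show ?thesis
    using assms unfolding vert_hom_def hom_maps_def by blast
qed

lemma convex_Int_reflection:
  assumes "convex P"
  shows "convex (P \<inter> (\<lambda>x. 2 *\<^sub>R c - x) ` P)"
proof -
  have "(\<lambda>x. 2 *\<^sub>R c - x) ` P = (+) (2 *\<^sub>R c) ` uminus ` P"
    by (auto simp: image_iff)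
  then show ?thesis
    using assms by (simp add: convex_Int convex_translation convex_negations)
qed

lemma centrally_symmetric_about_Int_reflection:
  assumes "centrally_symmetric_about c P"
  shows "P \<inter> (\<lambda>x. 2 *\<^sub>R c - x) ` P = P"
proof -
  have "x = 2 *\<^sub>R c - (2 *\<^sub>R c - x)" for x
    by simp
  then show ?thesis
    using assms unfolding centrally_symmetric_about_def by blast
qed

lemma vert_convex_hull_subset_vert:
  assumes "S \<subseteq> vert T" and "convex T"
  shows "vert (convex hull S) = S"
proof
  show "vert (convex hull S) \<subseteq> S"
    unfolding vert_def using extreme_point_of_convex_hull by blast
  have "S \<subseteq> T"
    using assms(1) unfolding vert_def extreme_point_of_def by blast
  then have "convex hull S \<subseteq> T"
    using \<open>convex T\<close> by (rule hull_minimal)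
  then show "S \<subseteq> vert (convex hull S)"
    using assms(1) hull_subset[of S convex] unfolding vert_def extreme_point_of_def by blast
qed

definition diamond_vertices :: "(real^'m) set" where
  "diamond_vertices = range (\<lambda>i. axis i 1) \<union> range (\<lambda>i. - axis i 1)"

lemma diamond_eq_convex_hull_vertices: "diamond = convex hull diamond_vertices"
  unfolding diamond_def diamond_vertices_def ..

lemma diamond_vertices_subset_diamond: "diamond_vertices \<subseteq> diamond"
  unfolding diamond_eq_convex_hull_vertices by (rule hull_subset)

lemma finite_diamond_vertices: "finite diamond_vertices"
  unfolding diamond_vertices_def by simp

lemma uminus_in_diamond_vertices: "v \<in> diamond_vertices \<Longrightarrow> - v \<in> diamond_vertices"
  unfolding diamond_vertices_def by auto

lemma inner_diamond_vertices:
  assumes "v \<in> diamond_vertices" and "w \<in> diamond_vertices"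
  shows "v \<bullet> w = (if w = v then 1 else if w = - v then -1 else 0)"
proof -
  have neg_axis: "- axis i (x::real) = axis i (- x)" for i x
    by (simp add: axis_def vec_eq_iff)
  show ?thesis
    using assms unfolding diamond_vertices_def
    by (auto simp: neg_axis inner_axis_axis axis_eq_axis)
qed

lemma vert_diamond: "vert diamond = diamond_vertices"
proof
  show "vert diamond \<subseteq> diamond_vertices"
    unfolding vert_def diamond_eq_convex_hull_vertices using extreme_point_of_convex_hull by blast
next
  show "diamond_vertices \<subseteq> vert diamond"
  proof
    fix v :: "real^'m"
    assume v: "v \<in> diamond_vertices"
    have "diamond_vertices - {v} \<subseteq> {x. v \<bullet> x \<le> 0}"
      using inner_diamond_vertices[OF v] by auto
    then have "convex hull (diamond_vertices - {v}) \<subseteq> {x. v \<bullet> x \<le> 0}"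
      by (intro hull_minimal convex_halfspace_le)
    moreover have "v \<bullet> v = 1"
      using inner_diamond_vertices[OF v v] by simp
    ultimately have "v \<notin> convex hull (diamond_vertices - {v})"
      by auto
    then have "v extreme_point_of convex hull (insert v (diamond_vertices - {v}))"
      using finite_diamond_vertices by (intro extreme_point_of_convex_hull_insert) auto
    then show "v \<in> vert diamond"
      using v unfolding vert_def diamond_eq_convex_hull_vertices by (simp add: insert_absorb)
  qed
qed

lemma hom_maps_diamond_perturb_vertex:
  fixes f :: "real^'m \<Rightarrow> 'a::real_vector"
  assumes f: "f \<in> hom_maps diamond P" and "convex P" and v: "v \<in> diamond_vertices"
    and "f v + d \<in> P" and "f (- v) - d \<in> P"
  shows "(\<lambda>x. f x + (v \<bullet> x) *\<^sub>R d) \<in> hom_maps diamond P"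
proof -
  let ?F = "\<lambda>x. f x + (v \<bullet> x) *\<^sub>R d"
  have "affine_map ?F"
  proof (rule affine_map_add_linear)
    show "affine_map f"
      using f unfolding hom_maps_def by blast
    show "linear (\<lambda>x. (v \<bullet> x) *\<^sub>R d)"
      by (rule linearI) (simp_all add: inner_add_right scaleR_add_left)
  qed
  have "?F w \<in> P" if w: "w \<in> diamond_vertices" for w
  proof -
    have "f w \<in> P"
      using f w diamond_vertices_subset_diamond unfolding hom_maps_def by blast
    then show ?thesis
      using assms inner_diamond_vertices[OF v w] by (auto simp: algebra_simps)
  qed
  then have "convex hull (?F ` diamond_vertices) \<subseteq> P"
    using \<open>convex P\<close> by (intro hull_minimal) auto
  then have "?F ` diamond \<subseteq> P"
    unfolding diamond_eq_convex_hull_vertices affine_map_image_convex_hull[OF \<open>affine_map ?F\<close>] .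
  then show ?thesis
    using \<open>affine_map ?F\<close> unfolding hom_maps_def by blast
qed

lemma vert_hom_diamond_vertex_extreme:
  fixes f :: "real^'m \<Rightarrow> 'a::real_vector"
  assumes f: "f \<in> vert_hom diamond P" and "convex P" and v: "v \<in> diamond_vertices"
  shows "f v extreme_point_of (P \<inter> (\<lambda>x. 2 *\<^sub>R f 0 - x) ` P)"
proof -
  let ?T = "P \<inter> (\<lambda>x. 2 *\<^sub>R f 0 - x) ` P"
  define F where "F d x = f x + (v \<bullet> x) *\<^sub>R d" for d x
  have f_hom: "f \<in> hom_maps diamond P"
    using f unfolding vert_hom_def by blast
  then have "affine_map f"
    unfolding hom_maps_def by blast
  have f_reflect: "f (- v) = 2 *\<^sub>R f 0 - f v"
    using \<open>affine_map f\<close> by (rule affine_map_reflect)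
  have f_in_P: "f w \<in> P" if "w \<in> diamond_vertices" for w
    using f_hom that diamond_vertices_subset_diamond unfolding hom_maps_def by blast
  have F_hom: "F (a - f v) \<in> hom_maps diamond P" if "a \<in> ?T" for a
  proof -
    obtain a' where "a' \<in> P" and "a = 2 *\<^sub>R f 0 - a'"
      using \<open>a \<in> ?T\<close> by blast
    then have "f (- v) - (a - f v) \<in> P"
      by (simp add: f_reflect)
    then show ?thesis
      unfolding F_def using \<open>a \<in> ?T\<close>
      by (intro hom_maps_diamond_perturb_vertex[OF f_hom \<open>convex P\<close> v]) auto
  qed
  have "f v \<notin> open_segment a c" if "a \<in> ?T" and "c \<in> ?T" for a c
  proof
    assume "f v \<in> open_segment a c"
    then obtain u where "a \<noteq> c" "0 < u" "u < 1" and fv: "f v = (1 - u) *\<^sub>R a + u *\<^sub>R c"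
      by (auto simp: in_segment)
    have "(1 - u) *\<^sub>R (a - f v) + u *\<^sub>R (c - f v) = 0"
      using fv by (simp add: algebra_simps)
    moreover have "(1 - u) *\<^sub>R F (a - f v) x + u *\<^sub>R F (c - f v) x
        = f x + (v \<bullet> x) *\<^sub>R ((1 - u) *\<^sub>R (a - f v) + u *\<^sub>R (c - f v))" for x
      unfolding F_def by (simp add: algebra_simps)
    ultimately have "f x = (1 - u) *\<^sub>R F (a - f v) x + u *\<^sub>R F (c - f v) x" for x
      by simp
    then have "\<forall>x\<in>diamond. F (a - f v) x = F (c - f v) x"
      using f F_hom[OF \<open>a \<in> ?T\<close>] F_hom[OF \<open>c \<in> ?T\<close>] \<open>0 < u\<close> \<open>u < 1\<close>
      unfolding vert_hom_def by blast
    then have "F (a - f v) v = F (c - f v) v"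
      using v diamond_vertices_subset_diamond by blast
    then show False
      using \<open>a \<noteq> c\<close> inner_diamond_vertices[OF v v] unfolding F_def by simp
  qed
  moreover have "f v \<in> ?T"
    using f_in_P[OF v] f_in_P[OF uminus_in_diamond_vertices[OF v]] f_reflect
    by (auto intro!: image_eqI[of _ _ "f (- v)"])
  ultimately show ?thesis
    unfolding extreme_point_of_def by blast
qed

lemma vert_hom_diamond_image_vertices:
  fixes f :: "real^'m \<Rightarrow> 'a::real_vector"
  assumes "f \<in> vert_hom diamond P" and "convex P"
  shows "f ` vert diamond \<subseteq> vert (P \<inter> (\<lambda>x. 2 *\<^sub>R f 0 - x) ` P)"
  using vert_hom_diamond_vertex_extreme[OF assms] unfolding vert_diamond unfolding vert_def by blast

theorem corollary3p2:
  fixes P :: "'a::euclidean_space set" and R Q :: "'b::euclidean_space set"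
  assumes "polytope P" and "polytope R" and "polytope Q" and "R \<subseteq> Q"
    and "CARD('m::finite) \<ge> 2"
  shows "(\<forall>f. f \<in> vert_hom P Q \<and> f ` P \<subseteq> R \<longrightarrow> f \<in> vert_hom P R)
    \<and> (\<forall>f :: real^'m \<Rightarrow> 'a. f \<in> vert_hom diamond P \<and> centrally_symmetric_about (f 0) P
          \<longrightarrow> f ` vert diamond \<subseteq> vert P)
    \<and> (\<forall>f :: real^'m \<Rightarrow> 'a. f \<in> vert_hom diamond P
          \<longrightarrow> f ` vert diamond = vert (f ` diamond)
            \<and> vert (f ` diamond) \<subseteq> vert (P \<inter> (\<lambda>x. 2 *\<^sub>R f 0 - x) ` P))"
proof (intro conjI allI impI; (elim conjE)?)
  show "f \<in> vert_hom P R" if "f \<in> vert_hom P Q" and "f ` P \<subseteq> R" for f :: "'a \<Rightarrow> 'b"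
    using that \<open>R \<subseteq> Q\<close> by (rule vert_hom_restrict_codomain)
  have "convex P"
    using \<open>polytope P\<close> by (rule polytope_imp_convex)
  fix f :: "real^'m \<Rightarrow> 'a"
  assume f: "f \<in> vert_hom diamond P"
  then have vert_image: "f ` vert diamond \<subseteq> vert (P \<inter> (\<lambda>x. 2 *\<^sub>R f 0 - x) ` P)"
    using \<open>convex P\<close> by (rule vert_hom_diamond_image_vertices)
  show "f ` vert diamond \<subseteq> vert P" if "centrally_symmetric_about (f 0) P"
    using vert_image unfolding centrally_symmetric_about_Int_reflection[OF that] .
  have "affine_map f"
    using f unfolding vert_hom_def hom_maps_def by blast
  then have "f ` diamond = convex hull (f ` vert diamond)"
    unfolding vert_diamond
    by (simp only: diamond_eq_convex_hull_vertices affine_map_image_convex_hull)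
  then show image_vert: "f ` vert diamond = vert (f ` diamond)"
    using vert_convex_hull_subset_vert[OF vert_image convex_Int_reflection[OF \<open>convex P\<close>]] by simp
  show "vert (f ` diamond) \<subseteq> vert (P \<inter> (\<lambda>x. 2 *\<^sub>R f 0 - x) ` P)"
    using vert_image unfolding image_vert .
qed

end
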